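(* Consider the $D_3$-action on $U(\mathfrak{sl}_2)$ by algebra automorphisms with $\sigma:(E,F,H)\mapsto(\mathbf iF,-\mathbf iE,-H)$ and $\tau:(E,F,H)\mapsto\big(\tfrac{H-\mathbf iE-\mathbf iF}{2},\tfrac{H+\mathbf iE+\mathbf iF}{2},\mathbf iE-\mathbf iF\big)$, and the $D_3$-action on $\Re$ by algebra automorphisms with $\sigma:(A,B,C,\Delta)\mapsto(C,B,A,-\Delta)$ and $\tau:(A,B,C,\Delta)\mapsto(B,C,A,\Delta)$. Then for every $g\in D_3$, $g\circ\sharp=\sharp\circ g$ as maps $\Re\to U(\mathfrak{sl}_2)$.
   Context: All algebras are unital associative over $\mathbb C$, $[x,y]=xy-yx$, $\mathbf i=\sqrt{-1}$. $U(\mathfrak{sl}_2)$ is generated by $E,F,H$ with $[H,E]=2E$, $[H,F]=-2F$, $[E,F]=H$. $\Re$ is generated by $A,B,C,\Delta$ with $[A,B]=[B,C]=[C,A]=2\Delta$ and such that $[A,\Delta]+AC-BA$, $[B,\Delta]+BA-CB$, $[C,\Delta]+CB-AC$ are central. $D_3=\langle\sigma,\tau\mid \sigma^2=\tau^3=(\sigma\tau)^2=1\rangle$ (both displayed actions are known to be well-defined group actions by algebra automorphisms). $\sharp:\Re\to U(\mathfrak{sl}_2)$ is the unique algebra homomorphism with $A\mapsto \frac{(E+F-2)(E+F+2)}{16}$, $B\mapsto\frac{(H-2)(H+2)}{16}$, $C\mapsto\frac{(\mathbf iE-\mathbf iF-2)(\mathbf iE-\mathbf iF+2)}{16}$, $\Delta\mapsto\frac{(H+2)F^2-(H-2)E^2}{64}$.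 *)

theory Defs
  imports Complex_Main
begin

text \<open>A noncommutative polynomial over C in letters of type 'g is a finitely
supported function from words ('g list) to complex coefficients.\<close>

type_synonym 'g ncp = "'g list \<Rightarrow> complex"

definition ncpoly :: "'g ncp \<Rightarrow> bool" where
  "ncpoly p \<longleftrightarrow> finite {w. p w \<noteq> 0}"

definition pconst :: "complex \<Rightarrow> 'g ncp" where
  "pconst c = (\<lambda>w. if w = [] then c else 0)"

definition pvar :: "'g \<Rightarrow> 'g ncp" where
  "pvar x = (\<lambda>w. if w = [x] then 1 else 0)"

definition padd :: "'g ncp \<Rightarrow> 'g ncp \<Rightarrow> 'g ncp" where
  "padd p q = (\<lambda>w. p w + q w)"

definition psub :: "'g ncp \<Rightarrow> 'g ncp \<Rightarrow> 'g ncp" where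
  "psub p q = (\<lambda>w. p w - q w)"

definition pscale :: "complex \<Rightarrow> 'g ncp \<Rightarrow> 'g ncp" where
  "pscale c p = (\<lambda>w. c * p w)"

definition pmul :: "'g ncp \<Rightarrow> 'g ncp \<Rightarrow> 'g ncp" where
  "pmul p q = (\<lambda>w. \<Sum>i\<le>length w. p (take i w) * q (drop i w))"

definition pcomm :: "'g ncp \<Rightarrow> 'g ncp \<Rightarrow> 'g ncp" where
  "pcomm p q = psub (pmul p q) (pmul q p)"

definition pprod :: "'g ncp list \<Rightarrow> 'g ncp" where
  "pprod ps = foldr pmul ps (pconst 1)"

definition psubst :: "('g \<Rightarrow> 'h ncp) \<Rightarrow> 'g ncp \<Rightarrow> 'h ncp" where
  "psubst \<phi> p = (\<lambda>v. \<Sum>w\<in>{w. p w \<noteq> 0}. p w * pprod (map \<phi> w) v)"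

inductive_set ideal_gen :: "'g ncp set \<Rightarrow> 'g ncp set" for R :: "'g ncp set" where
  zero: "pconst 0 \<in> ideal_gen R"
| gen: "r \<in> R \<Longrightarrow> r \<in> ideal_gen R"
| add: "p \<in> ideal_gen R \<Longrightarrow> q \<in> ideal_gen R \<Longrightarrow> padd p q \<in> ideal_gen R"
| scale: "p \<in> ideal_gen R \<Longrightarrow> pscale c p \<in> ideal_gen R"
| lmul: "p \<in> ideal_gen R \<Longrightarrow> ncpoly q \<Longrightarrow> pmul q p \<in> ideal_gen R"
| rmul: "p \<in> ideal_gen R \<Longrightarrow> ncpoly q \<Longrightarrow> pmul p q \<in> ideal_gen R"

datatype genU = gE | gF | gH

abbreviation "E \<equiv> pvar gE"
abbreviation "F \<equiv> pvar gF"
abbreviation "H \<equiv> pvar gH"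

definition relsU :: "genU ncp set" where
  "relsU = { psub (pcomm H E) (pscale 2 E),
             padd (pcomm H F) (pscale 2 F),
             psub (pcomm E F) H }"

definition idealU :: "genU ncp set" where
  "idealU = ideal_gen relsU"

datatype genR = gA | gB | gC | gD

abbreviation "Ar \<equiv> pvar gA"
abbreviation "Br \<equiv> pvar gB"
abbreviation "Cr \<equiv> pvar gC"
abbreviation "Dr \<equiv> pvar gD"

definition centR :: "genR ncp list" where
  "centR = [ psub (padd (pcomm Ar Dr) (pmul Ar Cr)) (pmul Br Ar),
             psub (padd (pcomm Br Dr) (pmul Br Ar)) (pmul Cr Br),
             psub (padd (pcomm Cr Dr) (pmul Cr Br)) (pmul Ar Cr) ]"

text \<open>Centrality of z in the quotient: z commutes with every generator
(equivalently with every element).\<close>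
definition relsR :: "genR ncp set" where
  "relsR = { psub (pcomm Ar Br) (pscale 2 Dr),
             psub (pcomm Br Cr) (pscale 2 Dr),
             psub (pcomm Cr Ar) (pscale 2 Dr) }
         \<union> { pcomm (pvar x) z | x z. z \<in> set centR }"

definition idealR :: "genR ncp set" where
  "idealR = ideal_gen relsR"

definition sharp_gen :: "genR \<Rightarrow> genU ncp" where
  "sharp_gen x = (case x of
      gA \<Rightarrow> pscale (1/16) (pmul (padd (padd E F) (pconst (-2))) (padd (padd E F) (pconst 2)))
    | gB \<Rightarrow> pscale (1/16) (pmul (padd H (pconst (-2))) (padd H (pconst 2)))
    | gC \<Rightarrow> pscale (1/16) (pmul (padd (psub (pscale \<i> E) (pscale \<i> F)) (pconst (-2)))
                                (padd (psub (pscale \<i> E) (pscale \<i> F)) (pconst 2)))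
    | gD \<Rightarrow> pscale (1/64) (psub (pmul (padd H (pconst 2)) (pmul F F))
                                (pmul (padd H (pconst (-2))) (pmul E E))))"

definition sharp :: "genR ncp \<Rightarrow> genU ncp" where
  "sharp = psubst sharp_gen"

datatype D3gen = sigma | tau

definition actU_gen :: "D3gen \<Rightarrow> genU \<Rightarrow> genU ncp" where
  "actU_gen g x = (case g of
      sigma \<Rightarrow> (case x of gE \<Rightarrow> pscale \<i> F | gF \<Rightarrow> pscale (-\<i>) E | gH \<Rightarrow> pscale (-1) H)
    | tau \<Rightarrow> (case x of
          gE \<Rightarrow> pscale (1/2) (psub (psub H (pscale \<i> E)) (pscale \<i> F))
        | gF \<Rightarrow> pscale (1/2) (padd (padd H (pscale \<i> E)) (pscale \<i> F))
        | gH \<Rightarrow> psub (pscale \<i> E) (pscale \<i> F)))"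

definition actR_gen :: "D3gen \<Rightarrow> genR \<Rightarrow> genR ncp" where
  "actR_gen g x = (case g of
      sigma \<Rightarrow> (case x of gA \<Rightarrow> Cr | gB \<Rightarrow> Br | gC \<Rightarrow> Ar | gD \<Rightarrow> pscale (-1) Dr)
    | tau \<Rightarrow> (case x of gA \<Rightarrow> Br | gB \<Rightarrow> Cr | gC \<Rightarrow> Ar | gD \<Rightarrow> Dr))"

text \<open>An element of D3 is a word in the generators sigma, tau; it acts as the
composite of the generator actions.\<close>
fun actU :: "D3gen list \<Rightarrow> genU ncp \<Rightarrow> genU ncp" where
  "actU [] p = p"
| "actU (g # gs) p = psubst (actU_gen g) (actU gs p)"

fun actR :: "D3gen list \<Rightarrow> genR ncp \<Rightarrow> genR ncp" where
  "actR [] p = p"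
| "actR (g # gs) p = psubst (actR_gen g) (actR gs p)"

end

theory Submission
  imports Defs
begin

text \<open>Both \<open>g \<circ> \<sharp>\<close> and \<open>\<sharp> \<circ> g\<close> are algebra homomorphisms out of the free algebra on
  \<open>A, B, C, \<Delta>\<close>, so by induction on the word \<open>g\<close> it
  suffices to compare them for a single generator \<open>\<sigma>\<close> or \<open>\<tau>\<close> on the four letters, modulo the
  relations of \<open>U(sl\<^sub>2)\<close>.
  Both \<open>\<sigma>\<close> and \<open>\<tau>\<close> map the triple \<open>(E, F, H)\<close> to another \<open>sl\<^sub>2\<close>-triple, hence respect the
  relations; and \<open>\<sigma>(A\<^sup>\<sharp>) = C\<^sup>\<sharp>\<close>, \<open>\<tau>(\<Delta>\<^sup>\<sharp>) = \<Delta>\<^sup>\<sharp>\<close>, etc. are identities valid for any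
  \<open>sl\<^sub>2\<close>-triple in a ring containing central elements \<open>\<i>\<close> and \<open>1/2\<close>.\<close>

section \<open>Polynomial arithmetic\<close>

definition psupp :: "'g ncp \<Rightarrow> 'g list set" where
  "psupp p = {w. p w \<noteq> 0}"

definition pmonom :: "'g list \<Rightarrow> 'g ncp" where
  "pmonom u = (\<lambda>w. if w = u then 1 else 0)"

definition psum :: "'a set \<Rightarrow> ('a \<Rightarrow> 'g ncp) \<Rightarrow> 'g ncp" where
  "psum S g = (\<lambda>w. \<Sum>s\<in>S. g s w)"

lemma ncpoly_iff_finite_psupp: "ncpoly p \<longleftrightarrow> finite (psupp p)"
  by (simp add: ncpoly_def psupp_def)

lemma psubst_eq_psum: "psubst \<phi> p = psum (psupp p) (\<lambda>w. pscale (p w) (pprod (map \<phi> w)))"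
  by (simp add: psubst_def psum_def pscale_def psupp_def)

lemma pprod_Nil [simp]: "pprod [] = pconst 1"
  and pprod_Cons [simp]: "pprod (x # xs) = pmul x (pprod xs)"
  by (simp_all add: pprod_def)

lemma psum_empty [simp]: "psum {} g = pconst 0"
  by (simp add: fun_eq_iff psum_def pconst_def)

lemma psum_insert: "finite S \<Longrightarrow> s \<notin> S \<Longrightarrow> psum (insert s S) g = padd (g s) (psum S g)"
  by (simp add: fun_eq_iff psum_def padd_def)

lemma padd_assoc: "padd (padd p q) r = padd p (padd q r)"
  and padd_commute: "padd p q = padd q p"
  and padd_pconst_0: "padd (pconst 0) p = p"
  and padd_pscale_neg: "padd (pscale (-1) p) p = pconst 0"
  and psub_eq_padd_pscale: "psub p q = padd p (pscale (-1) q)"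
  and psub_self: "psub p p = pconst 0"
  by (simp_all add: fun_eq_iff padd_def psub_def pscale_def pconst_def ac_simps)

lemma pmul_Nil [simp]: "pmul p q [] = p [] * q []"
  by (simp add: pmul_def)

lemma pmul_Cons: "pmul p q (x # w) = p [] * q (x # w) + pmul (\<lambda>u. p (x # u)) q w"
  unfolding pmul_def by (simp add: sum.atMost_Suc_shift del: sum.atMost_Suc)

lemma pmul_padd_left: "pmul (padd p p') q = padd (pmul p q) (pmul p' q)"
  and pmul_padd_right: "pmul q (padd p p') = padd (pmul q p) (pmul q p')"
  and pmul_psub_left: "pmul (psub p p') q = psub (pmul p q) (pmul p' q)"
  and pmul_psub_right: "pmul q (psub p p') = psub (pmul q p) (pmul q p')"
  and pmul_pscale_left: "pmul (pscale c p) q = pscale c (pmul p q)"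
  and pmul_pscale_right: "pmul q (pscale c p) = pscale c (pmul q p)"
  and pmul_psum_left: "pmul (psum S g) q = psum S (\<lambda>s. pmul (g s) q)"
  and pmul_psum_right: "pmul q (psum S g) = psum S (\<lambda>s. pmul q (g s))"
  by (simp_all add: fun_eq_iff pmul_def padd_def psub_def pscale_def psum_def algebra_simps
      sum.distrib sum_subtractf sum_distrib_left sum_distrib_right sum.swap[of _ S])

lemma pmul_assoc: "pmul (pmul p q) r = pmul p (pmul q r)"
proof -
  have "pmul (pmul p q) r w = pmul p (pmul q r) w" for w
  proof (induction w arbitrary: p)
    case Nil
    then show ?case by simp
  next
    case (Cons x w)
    have tail: "(\<lambda>u. pmul p q (x # u)) = padd (pscale (p []) (\<lambda>u. q (x # u))) (pmul (\<lambda>u. p (x # u)) q)"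
      by (simp add: fun_eq_iff pmul_Cons padd_def pscale_def)
    have "pmul (pmul p q) r (x # w) = p [] * q [] * r (x # w) + pmul (\<lambda>u. pmul p q (x # u)) r w"
      by (simp add: pmul_Cons)
    also have "pmul (\<lambda>u. pmul p q (x # u)) r w =
        p [] * pmul (\<lambda>u. q (x # u)) r w + pmul (pmul (\<lambda>u. p (x # u)) q) r w"
      by (simp only: tail pmul_padd_left pmul_pscale_left) (simp add: padd_def pscale_def)
    finally show ?case
      by (simp add: pmul_Cons Cons.IH distrib_left mult.assoc)
  qed
  then show ?thesis by blast
qed

lemma pmul_pconst_left: "pmul (pconst c) p = pscale c p"
proof -
  have "pmul (pconst c) p w = c * p w" for w
  proof (cases w)
    case (Cons x w')
    have "pmul (\<lambda>u. pconst c (x # u)) p w' = 0"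
      by (simp add: pmul_def pconst_def)
    then show ?thesis using Cons by (simp add: pmul_Cons pconst_def)
  qed (simp add: pconst_def)
  then show ?thesis by (simp add: fun_eq_iff pscale_def)
qed

lemma pmul_pconst_right: "pmul p (pconst c) = pscale c p"
proof -
  have "pmul p (pconst c) w = c * p w" for w
    by (induction w arbitrary: p) (simp_all add: pmul_Cons pconst_def)
  then show ?thesis by (simp add: fun_eq_iff pscale_def)
qed

lemma pmul_pmonom_left:
  fixes q :: "'g ncp"
  shows "pmul (pmonom u) q w = (if take (length u) w = u then q (drop (length u) w) else 0)"
proof (induction u arbitrary: w)
  case Nil
  have "pmonom [] = (pconst 1 :: 'g ncp)"
    by (simp add: fun_eq_iff pmonom_def pconst_def)
  then show ?case by (simp add: pmul_pconst_left pscale_def)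
next
  case (Cons a u)
  show ?case
  proof (cases w)
    case (Cons x w')
    have "(\<lambda>t. pmonom (a # u) (x # t)) = (if x = a then pmonom u else pconst 0)"
      by (auto simp: pmonom_def pconst_def fun_eq_iff)
    moreover have "pmul (pconst 0) q w' = 0"
      by (simp add: pmul_def pconst_def)
    ultimately show ?thesis
      using Cons.IH Cons by (simp add: pmul_Cons pmonom_def)
  qed (simp add: pmonom_def)
qed

lemma pmul_pmonom: "pmul (pmonom u) (pmonom v) = pmonom (u @ v)"
proof -
  have "pmul (pmonom u) (pmonom v) w = pmonom (u @ v) w" for w
    unfolding pmul_pmonom_left by (auto simp: pmonom_def dest: sym) (metis append_take_drop_id)
  then show ?thesis by blast
qed

lemma ncpoly_pconst [simp]: "ncpoly (pconst c)"
  unfolding ncpoly_def pconst_def by (rule finite_subset[of _ "{[]}"]) auto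

lemma ncpoly_pvar [simp]: "ncpoly (pvar x)"
  unfolding ncpoly_def pvar_def by (rule finite_subset[of _ "{[x]}"]) auto

lemma ncpoly_pmonom [simp]: "ncpoly (pmonom u)"
  unfolding ncpoly_def pmonom_def by (rule finite_subset[of _ "{u}"]) auto

lemma ncpoly_padd [simp]: "ncpoly p \<Longrightarrow> ncpoly q \<Longrightarrow> ncpoly (padd p q)"
  unfolding ncpoly_def padd_def by (rule finite_subset[of _ "{w. p w \<noteq> 0} \<union> {w. q w \<noteq> 0}"]) auto

lemma ncpoly_psub [simp]: "ncpoly p \<Longrightarrow> ncpoly q \<Longrightarrow> ncpoly (psub p q)"
  unfolding ncpoly_def psub_def by (rule finite_subset[of _ "{w. p w \<noteq> 0} \<union> {w. q w \<noteq> 0}"]) auto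

lemma ncpoly_pscale [simp]: "ncpoly p \<Longrightarrow> ncpoly (pscale c p)"
  unfolding ncpoly_def pscale_def by (rule finite_subset[of _ "{w. p w \<noteq> 0}"]) auto

lemma psupp_pmul: "psupp (pmul p q) \<subseteq> (\<lambda>(u, v). u @ v) ` (psupp p \<times> psupp q)"
proof
  fix w
  assume "w \<in> psupp (pmul p q)"
  then have "(\<Sum>i\<le>length w. p (take i w) * q (drop i w)) \<noteq> 0"
    by (simp add: psupp_def pmul_def)
  then obtain i where "p (take i w) * q (drop i w) \<noteq> 0"
    using sum.not_neutral_contains_not_neutral by blast
  then show "w \<in> (\<lambda>(u, v). u @ v) ` (psupp p \<times> psupp q)"
    by (auto simp: psupp_def image_iff) (metis append_take_drop_id)
qed

lemma ncpoly_pmul [simp]: "ncpoly p \<Longrightarrow> ncpoly q \<Longrightarrow> ncpoly (pmul p q)"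
  unfolding ncpoly_iff_finite_psupp using psupp_pmul
  by (metis finite_SigmaI finite_imageI finite_subset)

lemma psupp_psum: "psupp (psum S g) \<subseteq> (\<Union>s\<in>S. psupp (g s))"
proof
  fix w
  assume "w \<in> psupp (psum S g)"
  then have "(\<Sum>s\<in>S. g s w) \<noteq> 0"
    by (simp add: psupp_def psum_def)
  then obtain s where "s \<in> S" "g s w \<noteq> 0"
    using sum.not_neutral_contains_not_neutral by blast
  then show "w \<in> (\<Union>s\<in>S. psupp (g s))"
    by (auto simp: psupp_def)
qed

lemma ncpoly_psum [simp]:
  "finite S \<Longrightarrow> (\<And>s. s \<in> S \<Longrightarrow> ncpoly (g s)) \<Longrightarrow> ncpoly (psum S g)"
  unfolding ncpoly_iff_finite_psupp using psupp_psum
  by (metis (no_types, lifting) finite_UN_I finite_subset)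

lemma ncpoly_pprod [simp]: "(\<And>x. x \<in> set xs \<Longrightarrow> ncpoly x) \<Longrightarrow> ncpoly (pprod xs)"
  by (induction xs) auto

lemma ncpoly_psubst [simp]: "ncpoly p \<Longrightarrow> (\<And>x. ncpoly (\<phi> x)) \<Longrightarrow> ncpoly (psubst \<phi> p)"
  unfolding psubst_eq_psum
  by (intro ncpoly_psum ncpoly_pscale ncpoly_pprod) (auto simp: ncpoly_iff_finite_psupp[symmetric])

lemma psum_pmonom_expansion:
  assumes "ncpoly p"
  shows "p = psum (psupp p) (\<lambda>u. pscale (p u) (pmonom u))"
proof -
  have "(\<Sum>u\<in>psupp p. p u * (if w = u then 1 else 0)) = p w" for w
  proof (cases "w \<in> psupp p")
    case True
    have "(\<Sum>u\<in>psupp p. p u * (if w = u then 1 else 0)) = (\<Sum>u\<in>psupp p. if u = w then p w else 0)"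
      by (rule sum.cong) auto
    then show ?thesis
      using True assms by (simp add: ncpoly_iff_finite_psupp)
  next
    case False
    then have "(\<Sum>u\<in>psupp p. p u * (if w = u then 1 else 0)) = 0"
      by (intro sum.neutral) auto
    then show ?thesis
      using False by (simp add: psupp_def)
  qed
  then show ?thesis
    by (simp add: fun_eq_iff psum_def pscale_def pmonom_def)
qed

section \<open>The quotient ring\<close>

lemma ideal_gen_psub: "p \<in> ideal_gen R \<Longrightarrow> q \<in> ideal_gen R \<Longrightarrow> psub p q \<in> ideal_gen R"
  by (simp add: psub_eq_padd_pscale ideal_gen.add ideal_gen.scale)

lemma ideal_gen_Nil:
  assumes "\<And>r. r \<in> R \<Longrightarrow> r [] = 0"
  shows "p \<in> ideal_gen R \<Longrightarrow> p [] = 0"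
  by (induction rule: ideal_gen.induct) (auto simp: assms pconst_def padd_def pscale_def)

lemma ncpoly_relsU: "r \<in> relsU \<Longrightarrow> ncpoly r"
  by (auto simp: relsU_def pcomm_def)

text \<open>Partial, since the ideal is only closed under multiplication by finitely supported elements.\<close>

definition ueq :: "genU ncp \<Rightarrow> genU ncp \<Rightarrow> bool" where
  "ueq p q \<longleftrightarrow> ncpoly p \<and> ncpoly q \<and> psub p q \<in> idealU"

lemma ueq_self [simp]: "ueq p p \<longleftrightarrow> ncpoly p"
  by (simp add: ueq_def psub_self idealU_def ideal_gen.zero)

lemma part_equivp_ueq: "part_equivp ueq"
proof (rule part_equivpI)
  show "\<exists>p. ueq p p"
    using ncpoly_pconst ueq_self by blast
  show "symp ueq"
  proof (rule sympI)
    fix p q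
    assume "ueq p q"
    moreover have "psub q p = pscale (-1) (psub p q)"
      by (simp add: fun_eq_iff psub_def pscale_def)
    ultimately show "ueq q p"
      by (simp add: ueq_def idealU_def ideal_gen.scale)
  qed
  show "transp ueq"
  proof (rule transpI)
    fix p q r
    assume "ueq p q" and "ueq q r"
    moreover have "psub p r = padd (psub p q) (psub q r)"
      by (simp add: fun_eq_iff psub_def padd_def)
    ultimately show "ueq p r"
      by (simp add: ueq_def idealU_def ideal_gen.add)
  qed
qed

quotient_type usl2 = "genU ncp" / partial: ueq
  morphisms rep_usl2 abs_usl2
  by (rule part_equivp_ueq)

instantiation usl2 :: ring_1
begin

lift_definition zero_usl2 :: usl2 is "pconst 0"
  by simp

lift_definition one_usl2 :: usl2 is "pconst 1"
  by simp

lift_definition plus_usl2 :: "usl2 \<Rightarrow> usl2 \<Rightarrow> usl2" is padd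
proof -
  fix p p' q q'
  assume "ueq p p'" and "ueq q q'"
  moreover have "psub (padd p q) (padd p' q') = padd (psub p p') (psub q q')"
    by (simp add: fun_eq_iff psub_def padd_def)
  ultimately show "ueq (padd p q) (padd p' q')"
    by (simp add: ueq_def idealU_def ideal_gen.add)
qed

lift_definition uminus_usl2 :: "usl2 \<Rightarrow> usl2" is "pscale (-1)"
proof -
  fix p p'
  assume "ueq p p'"
  moreover have "psub (pscale (-1) p) (pscale (-1) p') = pscale (-1) (psub p p')"
    by (simp add: fun_eq_iff psub_def pscale_def algebra_simps)
  ultimately show "ueq (pscale (-1) p) (pscale (-1) p')"
    by (simp add: ueq_def idealU_def ideal_gen.scale)
qed

lift_definition minus_usl2 :: "usl2 \<Rightarrow> usl2 \<Rightarrow> usl2" is psub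
proof -
  fix p p' q q'
  assume "ueq p p'" and "ueq q q'"
  moreover have "psub (psub p q) (psub p' q') = psub (psub p p') (psub q q')"
    by (simp add: fun_eq_iff psub_def)
  ultimately show "ueq (psub p q) (psub p' q')"
    by (simp add: ueq_def idealU_def ideal_gen_psub)
qed

lift_definition times_usl2 :: "usl2 \<Rightarrow> usl2 \<Rightarrow> usl2" is pmul
proof -
  fix p p' q q'
  assume "ueq p p'" and "ueq q q'"
  moreover have "psub (pmul p q) (pmul p' q') = padd (pmul (psub p p') q) (pmul p' (psub q q'))"
    by (simp add: pmul_psub_left pmul_psub_right) (simp add: fun_eq_iff psub_def padd_def)
  ultimately show "ueq (pmul p q) (pmul p' q')"
    by (simp add: ueq_def idealU_def ideal_gen.add ideal_gen.lmul ideal_gen.rmul)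
qed

instance
proof
  fix a b c :: usl2
  show "a + b + c = a + (b + c)"
    by transfer (simp add: padd_assoc)
  show "a + b = b + a"
    by transfer (simp add: padd_commute)
  show "0 + a = a"
    by transfer (simp add: padd_pconst_0)
  show "- a + a = 0"
    by transfer (simp add: padd_pscale_neg)
  show "a - b = a + - b"
    by transfer (simp add: psub_eq_padd_pscale)
  show "a * b * c = a * (b * c)"
    by transfer (simp add: pmul_assoc)
  show "1 * a = a"
    by transfer (simp add: pmul_pconst_left fun_eq_iff pscale_def)
  show "a * 1 = a"
    by transfer (simp add: pmul_pconst_right fun_eq_iff pscale_def)
  show "(a + b) * c = a * c + b * c"
    by transfer (simp add: pmul_padd_left)
  show "a * (b + c) = a * b + a * c"
    by transfer (simp add: pmul_padd_right)
  have constant_term: "p \<in> idealU \<Longrightarrow> p [] = 0" for p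
    unfolding idealU_def
    by (rule ideal_gen_Nil) (auto simp: relsU_def pcomm_def psub_def padd_def pscale_def pvar_def)
  then show "(0 :: usl2) \<noteq> 1"
    by transfer (auto simp: ueq_def dest!: constant_term simp: psub_def pconst_def)
qed

end

lift_definition scalar :: "complex \<Rightarrow> usl2" is pconst
  by simp

lemma abs_usl2_padd: "ncpoly p \<Longrightarrow> ncpoly q \<Longrightarrow> abs_usl2 (padd p q) = abs_usl2 p + abs_usl2 q"
  and abs_usl2_psub: "ncpoly p \<Longrightarrow> ncpoly q \<Longrightarrow> abs_usl2 (psub p q) = abs_usl2 p - abs_usl2 q"
  and abs_usl2_pmul: "ncpoly p \<Longrightarrow> ncpoly q \<Longrightarrow> abs_usl2 (pmul p q) = abs_usl2 p * abs_usl2 q"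
  and abs_usl2_pconst: "abs_usl2 (pconst c) = scalar c"
  by (simp_all add: plus_usl2.abs_eq minus_usl2.abs_eq times_usl2.abs_eq scalar.abs_eq eq_onp_def)

lemma abs_usl2_pscale: "ncpoly p \<Longrightarrow> abs_usl2 (pscale c p) = scalar c * abs_usl2 p"
  by (simp add: abs_usl2_pconst abs_usl2_pmul flip: pmul_pconst_left)

lemmas abs_usl2_simps = abs_usl2_padd abs_usl2_psub abs_usl2_pmul abs_usl2_pscale abs_usl2_pconst

lemma abs_usl2_eq_iff:
  "ncpoly p \<Longrightarrow> ncpoly q \<Longrightarrow> abs_usl2 p = abs_usl2 q \<longleftrightarrow> psub p q \<in> idealU"
  using Quotient3_rel[OF Quotient3_usl2, of p q] by (auto simp: ueq_def)

lemma scalar_add: "scalar (a + b) = scalar a + scalar b"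
proof -
  have "pconst (a + b) = padd (pconst a) (pconst b)"
    by (simp add: fun_eq_iff padd_def pconst_def)
  then show ?thesis
    by (metis abs_usl2_padd abs_usl2_pconst ncpoly_pconst)
qed

lemma scalar_diff: "scalar (a - b) = scalar a - scalar b"
proof -
  have "pconst (a - b) = psub (pconst a) (pconst b)"
    by (simp add: fun_eq_iff psub_def pconst_def)
  then show ?thesis
    by (metis abs_usl2_psub abs_usl2_pconst ncpoly_pconst)
qed

lemma scalar_mult: "scalar (a * b) = scalar a * scalar b"
proof -
  have "pconst (a * b) = pmul (pconst a) (pconst b)"
    by (simp add: pmul_pconst_left) (simp add: fun_eq_iff pscale_def pconst_def)
  then show ?thesis
    by (metis abs_usl2_pmul abs_usl2_pconst ncpoly_pconst)
qed

lemma scalar_0 [simp]: "scalar 0 = 0"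
  and scalar_1 [simp]: "scalar 1 = 1"
  by (simp_all add: scalar_def zero_usl2_def one_usl2_def)

lemma scalar_uminus [simp]: "scalar (- a) = - scalar a"
  using scalar_diff[of 0 a] by simp

lemma scalar_numeral [simp]: "scalar (numeral n) = numeral n"
proof -
  have "scalar (of_nat m) = of_nat m" for m
    by (induction m) (simp_all add: scalar_add)
  from this[of "numeral n"] show ?thesis by simp
qed

lemma scalar_central: "scalar c * x = x * scalar c"
  by transfer (simp add: pmul_pconst_left pmul_pconst_right)

lemma scalar_left_commute: "scalar a * (scalar b * x) = scalar b * (scalar a * x)"
  by (simp flip: mult.assoc scalar_mult add: mult.commute)

lemma abs_usl2_psum:
  "finite S \<Longrightarrow> (\<And>s. s \<in> S \<Longrightarrow> ncpoly (g s)) \<Longrightarrow> abs_usl2 (psum S g) = (\<Sum>s\<in>S. abs_usl2 (g s))"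
  by (induction S rule: finite_induct) (simp_all add: psum_insert abs_usl2_padd abs_usl2_pconst)

lemma abs_usl2_pprod:
  "(\<And>x. x \<in> set xs \<Longrightarrow> ncpoly x) \<Longrightarrow> abs_usl2 (pprod xs) = prod_list (map abs_usl2 xs)"
  by (induction xs) (simp_all add: abs_usl2_pconst abs_usl2_pmul)

definition eval_usl2 :: "('g \<Rightarrow> usl2) \<Rightarrow> 'g ncp \<Rightarrow> usl2" where
  "eval_usl2 f p = (\<Sum>w\<in>psupp p. scalar (p w) * prod_list (map f w))"

lemma eval_usl2_eq_sum:
  "finite W \<Longrightarrow> psupp p \<subseteq> W \<Longrightarrow> eval_usl2 f p = (\<Sum>w\<in>W. scalar (p w) * prod_list (map f w))"
  unfolding eval_usl2_def by (rule sum.mono_neutral_left) (auto simp: psupp_def)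

lemma eval_usl2_pconst: "eval_usl2 f (pconst c) = scalar c"
  by (subst eval_usl2_eq_sum[of "{[]}"]) (auto simp: psupp_def pconst_def)

lemma eval_usl2_pvar: "eval_usl2 f (pvar x) = f x"
  by (subst eval_usl2_eq_sum[of "{[x]}"]) (auto simp: psupp_def pvar_def)

lemma eval_usl2_pmonom: "eval_usl2 f (pmonom u) = prod_list (map f u)"
  by (subst eval_usl2_eq_sum[of "{u}"]) (auto simp: psupp_def pmonom_def)

lemma eval_usl2_padd:
  assumes "ncpoly p" and "ncpoly q"
  shows "eval_usl2 f (padd p q) = eval_usl2 f p + eval_usl2 f q"
proof -
  have "finite (psupp p \<union> psupp q)"
    using assms by (simp add: ncpoly_iff_finite_psupp)
  moreover have "psupp (padd p q) \<subseteq> psupp p \<union> psupp q"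
    by (auto simp: psupp_def padd_def)
  ultimately show ?thesis
    by (simp add: eval_usl2_eq_sum[of "psupp p \<union> psupp q"] padd_def scalar_add
        distrib_right sum.distrib)
qed

lemma eval_usl2_pscale:
  assumes "ncpoly p"
  shows "eval_usl2 f (pscale c p) = scalar c * eval_usl2 f p"
proof -
  have "psupp (pscale c p) \<subseteq> psupp p"
    by (auto simp: psupp_def pscale_def)
  with assms show ?thesis
    by (simp add: eval_usl2_eq_sum[of "psupp p"] ncpoly_iff_finite_psupp pscale_def scalar_mult
        sum_distrib_left mult.assoc)
qed

lemma eval_usl2_psub:
  "ncpoly p \<Longrightarrow> ncpoly q \<Longrightarrow> eval_usl2 f (psub p q) = eval_usl2 f p - eval_usl2 f q"
  by (simp add: psub_eq_padd_pscale eval_usl2_padd eval_usl2_pscale)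

lemma eval_usl2_psum:
  "finite S \<Longrightarrow> (\<And>s. s \<in> S \<Longrightarrow> ncpoly (g s)) \<Longrightarrow> eval_usl2 f (psum S g) = (\<Sum>s\<in>S. eval_usl2 f (g s))"
  by (induction S rule: finite_induct) (simp_all add: psum_insert eval_usl2_padd eval_usl2_pconst)

lemma eval_usl2_pmul:
  assumes p: "ncpoly p" and q: "ncpoly q"
  shows "eval_usl2 f (pmul p q) = eval_usl2 f p * eval_usl2 f q"
proof -
  let ?M = "\<lambda>w. prod_list (map f w)"
  have fin: "finite (psupp p)" "finite (psupp q)"
    using p q by (simp_all add: ncpoly_iff_finite_psupp)
  have "pmul p q = psum (psupp p) (\<lambda>u. psum (psupp q)
      (\<lambda>v. pmul (pscale (p u) (pmonom u)) (pscale (q v) (pmonom v))))"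
    by (subst psum_pmonom_expansion[OF p], subst psum_pmonom_expansion[OF q])
      (subst pmul_psum_left, simp only: pmul_psum_right)
  then have "eval_usl2 f (pmul p q) =
      (\<Sum>u\<in>psupp p. \<Sum>v\<in>psupp q. scalar (p u) * (scalar (q v) * ?M (u @ v)))"
    using fin by (simp add: eval_usl2_psum pmul_pscale_left pmul_pscale_right pmul_pmonom
        eval_usl2_pscale eval_usl2_pmonom scalar_left_commute)
  also have "\<dots> = (\<Sum>u\<in>psupp p. \<Sum>v\<in>psupp q. scalar (p u) * ?M u * (scalar (q v) * ?M v))"
  proof (intro sum.cong refl)
    fix u v
    have "scalar (q v) * ?M (u @ v) = ?M u * (scalar (q v) * ?M v)"
      by (simp add: scalar_central[of "q v" "?M u"] flip: mult.assoc)
    then show "scalar (p u) * (scalar (q v) * ?M (u @ v)) = scalar (p u) * ?M u * (scalar (q v) * ?M v)"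
      by (simp add: mult.assoc)
  qed
  also have "\<dots> = eval_usl2 f p * eval_usl2 f q"
    by (simp add: eval_usl2_def sum_product)
  finally show ?thesis .
qed

lemmas eval_usl2_simps = eval_usl2_padd eval_usl2_psub eval_usl2_pmul eval_usl2_pscale eval_usl2_pconst
  eval_usl2_pvar

lemma eval_usl2_pprod:
  "(\<And>x. x \<in> set xs \<Longrightarrow> ncpoly x) \<Longrightarrow> eval_usl2 f (pprod xs) = prod_list (map (eval_usl2 f) xs)"
  by (induction xs) (simp_all add: eval_usl2_pconst eval_usl2_pmul)

lemma eval_usl2_psubst:
  assumes q: "ncpoly q" and \<psi>: "\<And>x. ncpoly (\<psi> x)"
  shows "eval_usl2 f (psubst \<psi> q) = eval_usl2 (\<lambda>x. eval_usl2 f (\<psi> x)) q"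
proof -
  have "ncpoly (pprod (map \<psi> w))" for w
    by (rule ncpoly_pprod) (auto simp: \<psi>)
  moreover have "eval_usl2 f (pprod (map \<psi> w)) = prod_list (map (\<lambda>x. eval_usl2 f (\<psi> x)) w)" for w
    by (subst eval_usl2_pprod) (auto simp: \<psi> o_def)
  ultimately show ?thesis
    using q unfolding psubst_eq_psum eval_usl2_def[of _ q]
    by (subst eval_usl2_psum) (auto simp: ncpoly_iff_finite_psupp[symmetric] eval_usl2_pscale)
qed

lemma abs_usl2_psubst:
  assumes p: "ncpoly p" and \<phi>: "\<And>x. ncpoly (\<phi> x)"
  shows "abs_usl2 (psubst \<phi> p) = eval_usl2 (\<lambda>x. abs_usl2 (\<phi> x)) p"
proof -
  have "ncpoly (pprod (map \<phi> w))" for w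
    by (rule ncpoly_pprod) (auto simp: \<phi>)
  moreover have "abs_usl2 (pprod (map \<phi> w)) = prod_list (map (\<lambda>x. abs_usl2 (\<phi> x)) w)" for w
    by (subst abs_usl2_pprod) (auto simp: \<phi> o_def)
  ultimately show ?thesis
    using p unfolding psubst_eq_psum eval_usl2_def
    by (subst abs_usl2_psum) (auto simp: ncpoly_iff_finite_psupp[symmetric] abs_usl2_pscale)
qed

lemma eval_usl2_ideal_gen:
  assumes "\<And>r. r \<in> R \<Longrightarrow> ncpoly r" and "\<And>r. r \<in> R \<Longrightarrow> eval_usl2 f r = 0"
  shows "p \<in> ideal_gen R \<Longrightarrow> eval_usl2 f p = 0"
proof -
  have "p \<in> ideal_gen R \<Longrightarrow> eval_usl2 f p = 0 \<and> ncpoly p" for p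
    by (induction rule: ideal_gen.induct)
      (auto simp: assms eval_usl2_pconst eval_usl2_padd eval_usl2_pscale eval_usl2_pmul)
  then show "p \<in> ideal_gen R \<Longrightarrow> eval_usl2 f p = 0" by blast
qed

lemma eval_usl2_cong_abs_usl2:
  assumes "\<And>r. r \<in> relsU \<Longrightarrow> eval_usl2 f r = 0"
    and "ncpoly p" and "ncpoly q" and "abs_usl2 p = abs_usl2 q"
  shows "eval_usl2 f p = eval_usl2 f q"
proof -
  have "psub p q \<in> ideal_gen relsU"
    using assms abs_usl2_eq_iff by (simp add: idealU_def)
  then have "eval_usl2 f (psub p q) = 0"
    using eval_usl2_ideal_gen ncpoly_relsU assms(1) by blast
  with assms show ?thesis by (simp add: eval_usl2_psub)
qed

section \<open>\<open>sl\<^sub>2\<close>-triples\<close>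

definition square_minus_four :: "'a::ring_1 \<Rightarrow> 'a" where
  "square_minus_four x = (x - 2) * (x + 2)"

definition delta_poly :: "'a::ring_1 \<Rightarrow> 'a \<Rightarrow> 'a \<Rightarrow> 'a" where
  "delta_poly e f h = (h + 2) * (f * f) - (h - 2) * (e * e)"

lemma square_minus_four_uminus: "square_minus_four (- x) = square_minus_four x"
  by (simp add: square_minus_four_def algebra_simps mult_2 mult_2_right)

lemma square_minus_four_diff_commute: "square_minus_four (a - b) = square_minus_four (b - a)"
  by (metis minus_diff_eq square_minus_four_uminus)

text \<open>The relations are oriented as rewrite rules towards the ordering \<open>e, h, f\<close>.\<close>

locale sl2_triple =
  fixes e f h :: "'a::ring_1"
  assumes h_e: "h * e = e * h + 2 * e"
    and f_e: "f * e = e * f - h"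
    and f_h: "f * h = h * f + 2 * f"

locale sl2_triple_i_half = sl2_triple e f h for e f h :: "'a::ring_1" +
  fixes i c :: 'a
  assumes i_square: "i * i = -1"
    and i_central: "\<And>x. i * x = x * i"
    and c_central: "\<And>x. c * x = x * c"
    and c_double: "c + c = 1"
begin

lemma i_commute: "e * i = i * e" "f * i = i * f" "h * i = i * h"
  "e * (i * y) = i * (e * y)" "f * (i * y) = i * (f * y)" "h * (i * y) = i * (h * y)"
  by (metis i_central mult.assoc)+

lemma c_commute: "e * c = c * e" "f * c = c * f" "h * c = c * h" "i * c = c * i"
  "e * (c * y) = c * (e * y)" "f * (c * y) = c * (f * y)" "h * (c * y) = c * (h * y)"
  "i * (c * y) = c * (i * y)"
  by (metis c_central mult.assoc)+

lemma i_square_left: "i * (i * y) = - y"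
  by (metis i_square mult.assoc mult_minus1)

lemma c_double_left: "c * y + c * y = y" "c * y + (c * y + z) = y + z"
  by (metis c_double distrib_right mult_1) (metis c_double distrib_right mult_1 add.assoc)

lemma commute_left:
  "h * (e * y) = e * (h * y) + 2 * (e * y)"
  "f * (e * y) = e * (f * y) - h * y"
  "f * (h * y) = h * (f * y) + 2 * (f * y)"
  by (simp_all add: h_e f_e f_h distrib_right left_diff_distrib flip: mult.assoc)

lemmas i_half_simps = i_commute c_commute i_square_left c_double_left commute_left h_e f_e f_h
  i_square algebra_simps mult_2 mult_2_right

lemma sl2_triple_sigma: "sl2_triple (i * f) (- (i * e)) (- h)"
  by unfold_locales (simp_all add: i_half_simps)

lemma sl2_triple_tau: "sl2_triple (c * (h - i * e - i * f)) (c * (h + i * e + i * f)) (i * e - i * f)"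
  by unfold_locales (simp_all add: i_half_simps)

lemma delta_poly_sigma: "delta_poly (i * f) (- (i * e)) (- h) = - delta_poly e f h"
  by (simp add: delta_poly_def i_half_simps)

lemma delta_poly_tau:
  "delta_poly (c * (h - i * e - i * f)) (c * (h + i * e + i * f)) (i * e - i * f) = delta_poly e f h"
  by (simp add: delta_poly_def i_half_simps)

lemma square_minus_four_sigma: "square_minus_four (i * (i * f) + i * (i * e)) = square_minus_four (e + f)"
  by (simp add: square_minus_four_def i_half_simps)

lemma tau_add: "c * (h - i * e - i * f) + c * (h + i * e + i * f) = h"
  by (simp add: i_half_simps)

lemma tau_i_diff: "i * (c * (h - i * e - i * f)) - i * (c * (h + i * e + i * f)) = e + f"
  by (simp add: i_half_simps)

end

lemma abs_usl2_relsU: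
  assumes "r \<in> relsU"
  shows "abs_usl2 r = 0"
proof -
  have "psub r (pconst 0) = r"
    by (simp add: fun_eq_iff psub_def pconst_def)
  with assms have "psub r (pconst 0) \<in> idealU"
    by (simp add: idealU_def ideal_gen.gen)
  with assms show ?thesis
    using abs_usl2_eq_iff[of r "pconst 0"] ncpoly_relsU by (simp add: abs_usl2_pconst)
qed

lemma sl2_triple_usl2: "sl2_triple (abs_usl2 E) (abs_usl2 F) (abs_usl2 H)"
proof
  have "abs_usl2 (psub (pcomm H E) (pscale 2 E)) = 0"
    by (rule abs_usl2_relsU) (simp add: relsU_def)
  then show "abs_usl2 H * abs_usl2 E = abs_usl2 E * abs_usl2 H + 2 * abs_usl2 E"
    by (simp add: pcomm_def abs_usl2_simps diff_diff_eq)
  have "abs_usl2 (psub (pcomm E F) H) = 0"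
    by (rule abs_usl2_relsU) (simp add: relsU_def)
  then show "abs_usl2 F * abs_usl2 E = abs_usl2 E * abs_usl2 F - abs_usl2 H"
    by (simp add: pcomm_def abs_usl2_simps eq_diff_eq diff_eq_eq add.commute)
  have "abs_usl2 (padd (pcomm H F) (pscale 2 F)) = 0"
    by (rule abs_usl2_relsU) (simp add: relsU_def)
  then show "abs_usl2 F * abs_usl2 H = abs_usl2 H * abs_usl2 F + 2 * abs_usl2 F"
    by (simp add: pcomm_def abs_usl2_simps)
      (metis add_diff_eq diff_add_eq eq_iff_diff_eq_0 add.commute diff_add_cancel)
qed

interpretation U:
  sl2_triple_i_half "abs_usl2 E" "abs_usl2 F" "abs_usl2 H" "scalar \<i>" "scalar (1/2)"
proof (intro sl2_triple_i_half.intro sl2_triple_usl2 sl2_triple_i_half_axioms.intro)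
  show "scalar \<i> * scalar \<i> = -1"
    by (simp flip: scalar_mult)
  show "scalar (1/2) + scalar (1/2) = 1"
    by (simp flip: scalar_add)
qed (simp_all add: scalar_central)

lemma eval_usl2_relsU:
  assumes "sl2_triple (f gE) (f gF) (f gH)" and "r \<in> relsU"
  shows "eval_usl2 f r = 0"
  using assms(2)
  by (auto simp: relsU_def pcomm_def eval_usl2_simps sl2_triple.h_e[OF assms(1)]
      sl2_triple.f_e[OF assms(1)] sl2_triple.f_h[OF assms(1)])

lemma abs_usl2_actU_gen:
  "abs_usl2 (actU_gen sigma gE) = scalar \<i> * abs_usl2 F"
  "abs_usl2 (actU_gen sigma gF) = - (scalar \<i> * abs_usl2 E)"
  "abs_usl2 (actU_gen sigma gH) = - abs_usl2 H"
  "abs_usl2 (actU_gen tau gE) =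
    scalar (1/2) * (abs_usl2 H - scalar \<i> * abs_usl2 E - scalar \<i> * abs_usl2 F)"
  "abs_usl2 (actU_gen tau gF) =
    scalar (1/2) * (abs_usl2 H + scalar \<i> * abs_usl2 E + scalar \<i> * abs_usl2 F)"
  "abs_usl2 (actU_gen tau gH) = scalar \<i> * abs_usl2 E - scalar \<i> * abs_usl2 F"
  by (simp_all add: actU_gen_def abs_usl2_simps)

lemma eval_usl2_actU_gen_relsU: "r \<in> relsU \<Longrightarrow> eval_usl2 (\<lambda>y. abs_usl2 (actU_gen g y)) r = 0"
  by (cases g) (auto intro!: eval_usl2_relsU simp: abs_usl2_actU_gen U.sl2_triple_sigma
      U.sl2_triple_tau)

lemma eval_usl2_sharp_gen:
  "eval_usl2 f (sharp_gen gA) = scalar (1/16) * square_minus_four (f gE + f gF)"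
  "eval_usl2 f (sharp_gen gB) = scalar (1/16) * square_minus_four (f gH)"
  "eval_usl2 f (sharp_gen gC) = scalar (1/16) * square_minus_four (scalar \<i> * f gE - scalar \<i> * f gF)"
  "eval_usl2 f (sharp_gen gD) = scalar (1/64) * delta_poly (f gE) (f gF) (f gH)"
  by (simp_all add: sharp_gen_def eval_usl2_simps square_minus_four_def delta_poly_def)

lemma abs_usl2_sharp_gen:
  "abs_usl2 (sharp_gen gA) = scalar (1/16) * square_minus_four (abs_usl2 E + abs_usl2 F)"
  "abs_usl2 (sharp_gen gB) = scalar (1/16) * square_minus_four (abs_usl2 H)"
  "abs_usl2 (sharp_gen gC) =
    scalar (1/16) * square_minus_four (scalar \<i> * abs_usl2 E - scalar \<i> * abs_usl2 F)"
  "abs_usl2 (sharp_gen gD) = scalar (1/64) * delta_poly (abs_usl2 E) (abs_usl2 F) (abs_usl2 H)"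
  by (simp_all add: sharp_gen_def abs_usl2_simps square_minus_four_def delta_poly_def)

lemma sharp_gen_equivariant:
  "eval_usl2 (\<lambda>y. abs_usl2 (actU_gen g y)) (sharp_gen x) =
   eval_usl2 (\<lambda>y. abs_usl2 (sharp_gen y)) (actR_gen g x)"
  by (cases g; cases x)
    (simp_all add: eval_usl2_sharp_gen abs_usl2_actU_gen abs_usl2_sharp_gen actR_gen_def
      eval_usl2_pvar eval_usl2_pscale square_minus_four_uminus square_minus_four_diff_commute
      U.square_minus_four_sigma U.delta_poly_sigma U.tau_add U.tau_i_diff
      U.delta_poly_tau)

lemma ncpoly_sharp_gen [simp]: "ncpoly (sharp_gen x)"
  by (cases x) (simp_all add: sharp_gen_def)

lemma ncpoly_actU_gen [simp]: "ncpoly (actU_gen g y)"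
  by (cases g; cases y) (simp_all add: actU_gen_def)

lemma ncpoly_actR_gen [simp]: "ncpoly (actR_gen g y)"
  by (cases g; cases y) (simp_all add: actR_gen_def)

lemma ncpoly_sharp [simp]: "ncpoly p \<Longrightarrow> ncpoly (sharp p)"
  by (simp add: sharp_def)

lemma ncpoly_actU [simp]: "ncpoly p \<Longrightarrow> ncpoly (actU g p)"
  by (induction g) auto

lemma ncpoly_actR [simp]: "ncpoly p \<Longrightarrow> ncpoly (actR g p)"
  by (induction g) auto

lemma abs_usl2_psubst_actU_gen_sharp:
  assumes "ncpoly q"
  shows "abs_usl2 (psubst (actU_gen g) (sharp q)) = abs_usl2 (sharp (psubst (actR_gen g) q))"
proof -
  have "abs_usl2 (psubst (actU_gen g) (sharp q)) =
      eval_usl2 (\<lambda>y. abs_usl2 (actU_gen g y)) (psubst sharp_gen q)"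
    using assms by (simp add: abs_usl2_psubst sharp_def)
  also have "\<dots> = eval_usl2 (\<lambda>x. eval_usl2 (\<lambda>y. abs_usl2 (actU_gen g y)) (sharp_gen x)) q"
    using assms by (simp add: eval_usl2_psubst)
  also have "\<dots> = eval_usl2 (\<lambda>x. eval_usl2 (\<lambda>y. abs_usl2 (sharp_gen y)) (actR_gen g x)) q"
    by (simp only: sharp_gen_equivariant)
  also have "\<dots> = eval_usl2 (\<lambda>y. abs_usl2 (sharp_gen y)) (psubst (actR_gen g) q)"
    using assms by (simp add: eval_usl2_psubst)
  also have "\<dots> = abs_usl2 (sharp (psubst (actR_gen g) q))"
    using assms by (simp add: abs_usl2_psubst sharp_def)
  finally show ?thesis .
qed

lemma abs_usl2_actU_sharp:
  assumes "ncpoly p"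
  shows "abs_usl2 (actU g (sharp p)) = abs_usl2 (sharp (actR g p))"
proof (induction g)
  case (Cons h gs)
  have "abs_usl2 (actU (h # gs) (sharp p)) = eval_usl2 (\<lambda>y. abs_usl2 (actU_gen h y)) (actU gs (sharp p))"
    using assms by (simp add: abs_usl2_psubst)
  also have "\<dots> = eval_usl2 (\<lambda>y. abs_usl2 (actU_gen h y)) (sharp (actR gs p))"
    using assms Cons.IH by (intro eval_usl2_cong_abs_usl2 eval_usl2_actU_gen_relsU) simp_all
  also have "\<dots> = abs_usl2 (sharp (actR (h # gs) p))"
    using assms by (simp add: abs_usl2_psubst flip: abs_usl2_psubst_actU_gen_sharp)
  finally show ?case .
qed simp

theorem theorem3p2:
  fixes g :: "D3gen list" and p :: "genR ncp"
  assumes "ncpoly p"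
  shows "psub (actU g (sharp p)) (sharp (actR g p)) \<in> idealU"
  using abs_usl2_actU_sharp[OF assms] abs_usl2_eq_iff assms by simp

end
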